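(* Let $m\ge1$, $\mu>0$ and $\varphi:\Delta^m\to\Omega_3[m]$, $\varphi(z_1,\dots,z_m)=\operatorname{diag}(z_1,\dots,z_m)$. Then $f:M_{\Delta^m}(\mu)\to M_{\Omega_3[m]}(\mu)$, $f(z,w)=(\varphi(z),w)$, is a totally geodesic Kähler immersion.
   Context: $\Omega_3[m]=\{Z\in M_m(\mathbb C): Z=Z^T,\ I_m-ZZ^*>0\}$ with generic norm $N(Z,Z)=\det(I_m-ZZ^* )$. $\Delta^m$ is the unit polydisk with $N_{\Delta^m}(z,z)=\prod_j(1-|z_j|^2)$. For a domain $\Omega$ with generic norm $N_\Omega$ and $\mu>0$: $M_\Omega(\mu)=\{(z,w)\in\Omega\times\mathbb C:|w|^2<N_\Omega^\mu(z,z)\}$ with Kähler metric $\omega(\mu)=\frac i2\partial\bar\partial(-\log(N_\Omega^\mu(z,z)-|w|^2))$. A Kähler immersion is a holomorphic map pulling back the target metric to the source metric. *)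

theory Defs
  imports "HOL-Analysis.Analysis"
begin

text \<open>Points of the ambient complex vector spaces are elements of real normed vector
spaces 'a; the complex structure is given explicitly by a complex scalar action sc.\<close>

definition holo_on ::
  "(complex \<Rightarrow> 'a::real_normed_vector \<Rightarrow> 'a) \<Rightarrow> (complex \<Rightarrow> 'b::real_normed_vector \<Rightarrow> 'b)
   \<Rightarrow> 'a set \<Rightarrow> ('a \<Rightarrow> 'b) \<Rightarrow> bool" where
  "holo_on sa sb U f \<longleftrightarrow>
     (\<forall>p\<in>U. \<exists>L. (f has_derivative L) (at p) \<and> (\<forall>c v. L (sa c v) = sb c (L v)))"

text \<open>Metric of the Kaehler form (i/2) d dbar psi evaluated on a tangent vector v at p:
  sum g_{a bbar} v_a conj(v_b) = d_t dbar_t psi(p + t v) at t = 0 = (1/4) Laplacian in t.\<close>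

definition kform :: "(complex \<Rightarrow> 'a::real_normed_vector \<Rightarrow> 'a) \<Rightarrow> ('a \<Rightarrow> real) \<Rightarrow> 'a \<Rightarrow> 'a \<Rightarrow> real" where
  "kform sc psi p v =
     (deriv (deriv (\<lambda>x. psi (p + sc (complex_of_real x) v))) 0
      + deriv (deriv (\<lambda>y. psi (p + sc (\<i> * complex_of_real y) v))) 0) / 4"

text \<open>Associated Riemannian metric (real part of the Hermitian metric), by polarisation.\<close>

definition rmetric :: "(complex \<Rightarrow> 'a::real_normed_vector \<Rightarrow> 'a) \<Rightarrow> ('a \<Rightarrow> real) \<Rightarrow> 'a \<Rightarrow> 'a \<Rightarrow> 'a \<Rightarrow> real" where
  "rmetric sc psi p u v = (kform sc psi p (u + v) - kform sc psi p (u - v)) / 4"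

text \<open>Geodesics of a metric G on a manifold M, open in the (real) linear subspace V
  (its tangent space), on an open parameter interval (a,b): the Euler--Lagrange equations
  of the energy, d/dt G(gamma',w) = 1/2 (D_w G)(gamma',gamma') for every w in V.\<close>

definition geodesic ::
  "'a::real_normed_vector set \<Rightarrow> 'a set \<Rightarrow> ('a \<Rightarrow> 'a \<Rightarrow> 'a \<Rightarrow> real) \<Rightarrow> (real \<Rightarrow> 'a) \<Rightarrow> real \<Rightarrow> real \<Rightarrow> bool" where
  "geodesic M V G \<gamma> a b \<longleftrightarrow> a < b \<and> (\<forall>t\<in>{a<..<b}. \<gamma> t \<in> M) \<and>
     (\<exists>\<gamma>'. \<forall>t\<in>{a<..<b}. (\<gamma> has_vector_derivative \<gamma>' t) (at t) \<and> \<gamma>' t \<in> V \<and>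
        (\<forall>w\<in>V. ((\<lambda>s. G (\<gamma> s) (\<gamma>' s) w) has_real_derivative
                  (deriv (\<lambda>r. G (\<gamma> t + r *\<^sub>R w) (\<gamma>' t) (\<gamma>' t)) 0 / 2)) (at t)))"

definition kahler_immersion ::
  "'a::real_normed_vector set \<Rightarrow> 'a set \<Rightarrow> (complex \<Rightarrow> 'a \<Rightarrow> 'a) \<Rightarrow> ('a \<Rightarrow> real) \<Rightarrow>
   'b::real_normed_vector set \<Rightarrow> (complex \<Rightarrow> 'b \<Rightarrow> 'b) \<Rightarrow> ('b \<Rightarrow> real) \<Rightarrow> ('a \<Rightarrow> 'b) \<Rightarrow> bool" where
  "kahler_immersion M1 V1 s1 psi1 M2 s2 psi2 f \<longleftrightarrow>
     f ` M1 \<subseteq> M2 \<and> holo_on s1 s2 M1 f \<and>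
     (\<forall>p\<in>M1. \<forall>L. (f has_derivative L) (at p) \<longrightarrow>
        (\<forall>v\<in>V1. kform s2 psi2 (f p) (L v) = kform s1 psi1 p v))"

definition totally_geodesic ::
  "'a::real_normed_vector set \<Rightarrow> 'a set \<Rightarrow> ('a \<Rightarrow> 'a \<Rightarrow> 'a \<Rightarrow> real) \<Rightarrow>
   'b::real_normed_vector set \<Rightarrow> 'b set \<Rightarrow> ('b \<Rightarrow> 'b \<Rightarrow> 'b \<Rightarrow> real) \<Rightarrow> ('a \<Rightarrow> 'b) \<Rightarrow> bool" where
  "totally_geodesic M1 V1 G1 M2 V2 G2 f \<longleftrightarrow>
     (\<forall>\<gamma> a b. geodesic M1 V1 G1 \<gamma> a b \<longrightarrow> geodesic M2 V2 G2 (f \<circ> \<gamma>) a b)"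

definition polydisk :: "(complex^'m) set" where
  "polydisk = {z. \<forall>i. cmod (z$i) < 1}"

definition N_poly :: "complex^'m \<Rightarrow> real" where
  "N_poly z = (\<Prod>i\<in>UNIV. 1 - (cmod (z$i))^2)"

definition cadj :: "complex^'m^'m \<Rightarrow> complex^'m^'m" where
  "cadj Z = (\<chi> i j. cnj (Z$j$i))"

definition pos_def_herm :: "complex^'m^'m \<Rightarrow> bool" where
  "pos_def_herm A \<longleftrightarrow> (\<forall>v::complex^'m. v \<noteq> 0 \<longrightarrow>
      0 < Re (\<Sum>i\<in>UNIV. \<Sum>j\<in>UNIV. cnj (v$i) * A$i$j * v$j))"

definition Omega3 :: "(complex^'m^'m) set" where
  "Omega3 = {Z. transpose Z = Z \<and> pos_def_herm (mat 1 - Z ** cadj Z)}"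

definition N_Omega3 :: "complex^'m^'m \<Rightarrow> real" where
  "N_Omega3 Z = Re (det (mat 1 - Z ** cadj Z))"

definition hartogs :: "'a set \<Rightarrow> ('a \<Rightarrow> real) \<Rightarrow> real \<Rightarrow> ('a \<times> complex) set" where
  "hartogs \<Omega> N \<mu> = {(z, w). z \<in> \<Omega> \<and> (cmod w)^2 < N z powr \<mu>}"

definition hpot :: "('a \<Rightarrow> real) \<Rightarrow> real \<Rightarrow> 'a \<times> complex \<Rightarrow> real" where
  "hpot N \<mu> = (\<lambda>(z, w). - ln (N z powr \<mu> - (cmod w)^2))"

definition sc_src :: "complex \<Rightarrow> (complex^'m) \<times> complex \<Rightarrow> (complex^'m) \<times> complex" where
  "sc_src c = (\<lambda>(z, w). ((\<chi> i. c * z$i), c * w))"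

definition sc_tgt :: "complex \<Rightarrow> (complex^'m^'m) \<times> complex \<Rightarrow> (complex^'m^'m) \<times> complex" where
  "sc_tgt c = (\<lambda>(Z, w). ((\<chi> i j. c * Z$i$j), c * w))"

definition sym_tangent :: "((complex^'m^'m) \<times> complex) set" where
  "sym_tangent = {(Z, w). transpose Z = Z}"

definition diag_map :: "complex^'m \<Rightarrow> complex^'m^'m" where
  "diag_map z = (\<chi> i j. if i = j then z$i else 0)"

end

theory Submission
  imports Defs
begin

text \<open>The diagonal embedding is complex linear and pulls the potential of the target back to
  that of the source, because det(I - D D*) = prod_j (1 - |z_j|^2) for D = diag(z);
  hence it is a Kaehler immersion.  For total geodesy, conjugation by diag(1,..,-1,..,1) (with -1
  in position k) is a holomorphic isometry of the target that fixes the image pointwise and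
  negates the off-diagonal entries of row and column k.  The metric and its derivative along a
  line are linear in the free direction, so both vanish on such directions.  Along the image
  only the diagonal part of a tangent direction therefore matters, and the Euler--Lagrange
  equations of the target reduce to those of the source.\<close>

section \<open>Iterated Frechet differentiability\<close>

abbreviation fderiv :: "('a::real_normed_vector \<Rightarrow> 'b::real_normed_vector) \<Rightarrow> 'a \<Rightarrow> 'a \<Rightarrow> 'b" where
  "fderiv f p \<equiv> frechet_derivative f (at p)"

primrec higher_differentiable_on ::
  "'a::real_normed_vector set \<Rightarrow> ('a \<Rightarrow> 'b::real_normed_field) \<Rightarrow> nat \<Rightarrow> bool" where
  "higher_differentiable_on U f 0 = True"
| "higher_differentiable_on U f (Suc n) \<longleftrightarrow> (\<forall>p\<in>U. f differentiable (at p)) \<and>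
      (\<forall>v. higher_differentiable_on U (\<lambda>p. fderiv f p v) n)"

declare higher_differentiable_on.simps(2)[simp del]

lemma higher_differentiable_onI:
  "(\<And>p. p \<in> U \<Longrightarrow> f differentiable (at p)) \<Longrightarrow>
   (\<And>v. higher_differentiable_on U (\<lambda>p. fderiv f p v) n) \<Longrightarrow> higher_differentiable_on U f (Suc n)"
  unfolding higher_differentiable_on.simps(2) by blast

lemma higher_differentiable_on_differentiable:
  "higher_differentiable_on U f (Suc n) \<Longrightarrow> p \<in> U \<Longrightarrow> f differentiable (at p)"
  unfolding higher_differentiable_on.simps(2) by blast

lemma higher_differentiable_on_fderiv:
  "higher_differentiable_on U f (Suc n) \<Longrightarrow> higher_differentiable_on U (\<lambda>p. fderiv f p v) n"
  unfolding higher_differentiable_on.simps(2) by blast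

lemma higher_differentiable_on_has_derivative:
  "higher_differentiable_on U f (Suc n) \<Longrightarrow> p \<in> U \<Longrightarrow> (f has_derivative fderiv f p) (at p)"
  using higher_differentiable_on_differentiable frechet_derivative_works by blast

lemma fderiv_eq: "(f has_derivative F) (at p) \<Longrightarrow> fderiv f p v = F v"
  using frechet_derivative_at by metis

lemma higher_differentiable_on_Suc_imp:
  "higher_differentiable_on U f (Suc n) \<Longrightarrow> higher_differentiable_on U f n"
proof (induction n arbitrary: f)
  case (Suc n)
  then show ?case
    by (blast intro: higher_differentiable_onI higher_differentiable_on_differentiable
        higher_differentiable_on_fderiv)
qed simp

lemma higher_differentiable_on_subset:
  "higher_differentiable_on U f n \<Longrightarrow> V \<subseteq> U \<Longrightarrow> higher_differentiable_on V f n"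
proof (induction n arbitrary: f)
  case (Suc n)
  then show ?case
    by (blast intro: higher_differentiable_onI higher_differentiable_on_differentiable
        higher_differentiable_on_fderiv)
qed simp

lemma higher_differentiable_on_cong:
  assumes "higher_differentiable_on U f n" "open U" "\<And>p. p \<in> U \<Longrightarrow> f p = g p"
  shows "higher_differentiable_on U g n"
  using assms
proof (induction n arbitrary: f g)
  case (Suc n)
  have f': "(f has_derivative fderiv f p) (at p)" if "p \<in> U" for p
    using Suc.prems(1) that by (rule higher_differentiable_on_has_derivative)
  have g': "(g has_derivative fderiv f p) (at p)" if "p \<in> U" for p
    using has_derivative_transform_within_open[OF f'[OF that] Suc.prems(2) that Suc.prems(3)] .
  show ?case
  proof (rule higher_differentiable_onI)
    show "g differentiable (at p)" if "p \<in> U" for p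
      using g'[OF that] by (auto simp: differentiable_def)
    show "higher_differentiable_on U (\<lambda>p. fderiv g p v) n" for v
      using Suc.IH[OF higher_differentiable_on_fderiv[OF Suc.prems(1)] Suc.prems(2)]
      by (simp add: fderiv_eq[OF g'])
  qed
qed simp

lemma higher_differentiable_on_const: "higher_differentiable_on U (\<lambda>x. c) n"
  by (induction n arbitrary: c) (simp_all add: higher_differentiable_onI)

lemma higher_differentiable_on_bounded_linear:
  "bounded_linear L \<Longrightarrow> higher_differentiable_on U L n"
proof (induction n)
  case (Suc n)
  have "fderiv L p = L" for p
    using Suc.prems by (metis bounded_linear_imp_has_derivative frechet_derivative_at)
  then show ?case using Suc.prems
    by (intro higher_differentiable_onI)
      (auto intro: bounded_linear_imp_differentiable higher_differentiable_on_const)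
qed simp

lemma higher_differentiable_on_add:
  "higher_differentiable_on U f n \<Longrightarrow> higher_differentiable_on U g n \<Longrightarrow> open U \<Longrightarrow>
   higher_differentiable_on U (\<lambda>x. f x + g x) n"
proof (induction n arbitrary: f g)
  case (Suc n)
  have d: "((\<lambda>x. f x + g x) has_derivative (\<lambda>v. fderiv f p v + fderiv g p v)) (at p)"
    if "p \<in> U" for p
    using Suc.prems that by (intro has_derivative_add higher_differentiable_on_has_derivative)
  show ?case
  proof (rule higher_differentiable_onI)
    show "(\<lambda>x. f x + g x) differentiable (at p)" if "p \<in> U" for p
      using d[OF that] by (auto simp: differentiable_def)
    show "higher_differentiable_on U (\<lambda>p. fderiv (\<lambda>x. f x + g x) p v) n" for v
      by (rule higher_differentiable_on_cong[OF Suc.IH])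
        (use Suc.prems fderiv_eq[OF d] in \<open>auto intro: higher_differentiable_on_fderiv\<close>)
  qed
qed simp

lemma higher_differentiable_on_mult:
  "higher_differentiable_on U f n \<Longrightarrow> higher_differentiable_on U g n \<Longrightarrow> open U \<Longrightarrow>
   higher_differentiable_on U (\<lambda>x. f x * g x) n"
proof (induction n arbitrary: f g)
  case (Suc n)
  have d: "((\<lambda>x. f x * g x) has_derivative (\<lambda>v. f p * fderiv g p v + fderiv f p v * g p)) (at p)"
    if "p \<in> U" for p
    using Suc.prems that by (intro has_derivative_mult higher_differentiable_on_has_derivative)
  show ?case
  proof (rule higher_differentiable_onI)
    show "(\<lambda>x. f x * g x) differentiable (at p)" if "p \<in> U" for p
      using d[OF that] by (auto simp: differentiable_def)
    fix v
    have "higher_differentiable_on U (\<lambda>p. f p * fderiv g p v + fderiv f p v * g p) n"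
      using Suc.prems higher_differentiable_on_Suc_imp[OF Suc.prems(1)]
        higher_differentiable_on_Suc_imp[OF Suc.prems(2)]
      by (intro higher_differentiable_on_add Suc.IH higher_differentiable_on_fderiv) auto
    then show "higher_differentiable_on U (\<lambda>p. fderiv (\<lambda>x. f x * g x) p v) n"
      by (rule higher_differentiable_on_cong) (use Suc.prems fderiv_eq[OF d] in auto)
  qed
qed simp

lemma higher_differentiable_on_bounded_linear_compose:
  "higher_differentiable_on U f n \<Longrightarrow> bounded_linear h \<Longrightarrow> open U \<Longrightarrow>
   higher_differentiable_on U (\<lambda>x. h (f x)) n"
proof (induction n arbitrary: f)
  case (Suc n)
  have d: "((\<lambda>x. h (f x)) has_derivative (\<lambda>v. h (fderiv f p v))) (at p)" if "p \<in> U" for p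
    using bounded_linear.has_derivative[OF Suc.prems(2)
        higher_differentiable_on_has_derivative[OF Suc.prems(1) that]] .
  show ?case
  proof (rule higher_differentiable_onI)
    show "(\<lambda>x. h (f x)) differentiable (at p)" if "p \<in> U" for p
      using d[OF that] by (auto simp: differentiable_def)
    show "higher_differentiable_on U (\<lambda>p. fderiv (\<lambda>x. h (f x)) p v) n" for v
      by (rule higher_differentiable_on_cong[OF Suc.IH])
        (use Suc.prems fderiv_eq[OF d] in \<open>auto intro: higher_differentiable_on_fderiv\<close>)
  qed
qed simp

lemma higher_differentiable_on_diff:
  "higher_differentiable_on U f n \<Longrightarrow> higher_differentiable_on U g n \<Longrightarrow> open U \<Longrightarrow>
   higher_differentiable_on U (\<lambda>x. f x - g x) n"
proof -
  assume f: "higher_differentiable_on U f n" and g: "higher_differentiable_on U g n" and U: "open U"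
  have "higher_differentiable_on U (\<lambda>x. (-1) * g x) n"
    by (rule higher_differentiable_on_mult[OF higher_differentiable_on_const g U])
  then show ?thesis
    using higher_differentiable_on_add[OF f _ U] by fastforce
qed

lemma higher_differentiable_on_sum:
  "finite S \<Longrightarrow> (\<And>i. i \<in> S \<Longrightarrow> higher_differentiable_on U (f i) n) \<Longrightarrow> open U \<Longrightarrow>
   higher_differentiable_on U (\<lambda>x. \<Sum>i\<in>S. f i x) n"
  by (induction S rule: finite_induct)
    (auto intro: higher_differentiable_on_add higher_differentiable_on_const)

lemma higher_differentiable_on_prod:
  "finite S \<Longrightarrow> (\<And>i. i \<in> S \<Longrightarrow> higher_differentiable_on U (f i) n) \<Longrightarrow> open U \<Longrightarrow>
   higher_differentiable_on U (\<lambda>x. \<Prod>i\<in>S. f i x) n"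
  by (induction S rule: finite_induct)
    (auto intro: higher_differentiable_on_mult higher_differentiable_on_const)

lemma higher_differentiable_on_compose_real:
  fixes g :: "real \<Rightarrow> real" and f :: "'a::real_normed_vector \<Rightarrow> real"
  assumes "higher_differentiable_on S g n" "higher_differentiable_on U f n" "open U"
    "\<And>p. p \<in> U \<Longrightarrow> f p \<in> S"
  shows "higher_differentiable_on U (\<lambda>x. g (f x)) n"
  using assms
proof (induction n arbitrary: f g)
  case (Suc n)
  have g': "(g has_derivative (\<lambda>t. t * fderiv g y 1)) (at y)" if "y \<in> S" for y
  proof -
    define D where "D = fderiv g y 1"
    have g': "(g has_derivative fderiv g y) (at y)"
      using Suc.prems(1) that by (rule higher_differentiable_on_has_derivative)
    have "fderiv g y t = t * D" for t
    proof -
      have "fderiv g y (t *\<^sub>R 1) = t *\<^sub>R fderiv g y 1"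
        by (rule linear_scale[OF has_derivative_linear[OF g']])
      then show ?thesis by (simp add: D_def)
    qed
    then have "fderiv g y = (\<lambda>t. t * D)" by (rule ext)
    then show ?thesis
      using g' by simp
  qed
  have d: "((\<lambda>x. g (f x)) has_derivative (\<lambda>v. fderiv f p v * fderiv g (f p) 1)) (at p)"
    if "p \<in> U" for p
    using has_derivative_compose[OF higher_differentiable_on_has_derivative[OF Suc.prems(2) that]
        g'[OF Suc.prems(4)[OF that]]] .
  show ?case
  proof (rule higher_differentiable_onI)
    show "(\<lambda>x. g (f x)) differentiable (at p)" if "p \<in> U" for p
      using d[OF that] by (auto simp: differentiable_def)
    fix v
    have "higher_differentiable_on U (\<lambda>p. fderiv g (f p) 1) n"
      using Suc.IH[OF higher_differentiable_on_fderiv[OF Suc.prems(1)]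
          higher_differentiable_on_Suc_imp[OF Suc.prems(2)] Suc.prems(3,4)] .
    then have "higher_differentiable_on U (\<lambda>p. fderiv f p v * fderiv g (f p) 1) n"
      using higher_differentiable_on_fderiv[OF Suc.prems(2)] Suc.prems(3)
      by (intro higher_differentiable_on_mult)
    then show "higher_differentiable_on U (\<lambda>p. fderiv (\<lambda>x. g (f x)) p v) n"
      by (rule higher_differentiable_on_cong) (use Suc.prems fderiv_eq[OF d] in auto)
  qed
qed simp

lemma higher_differentiable_on_powr:
  "higher_differentiable_on {0<..} (\<lambda>x::real. x powr a) n"
proof (induction n arbitrary: a)
  case (Suc n)
  have d: "((\<lambda>x::real. x powr a) has_derivative (\<lambda>v. a * p powr (a - 1) * v)) (at p)"
    if "p \<in> {0<..}" for p
    using has_real_derivative_powr[of p a] that by (auto simp: has_field_derivative_def)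
  show ?case
  proof (rule higher_differentiable_onI)
    show "(\<lambda>x::real. x powr a) differentiable (at p)" if "p \<in> {0<..}" for p
      using d[OF that] by (auto simp: differentiable_def)
    fix v
    have "higher_differentiable_on {0<..} (\<lambda>p::real. a * p powr (a - 1)) n"
      by (rule higher_differentiable_on_mult[OF higher_differentiable_on_const Suc.IH]) simp
    then have "higher_differentiable_on {0<..} (\<lambda>p::real. a * p powr (a - 1) * v) n"
      by (rule higher_differentiable_on_mult[OF _ higher_differentiable_on_const]) simp
    then show "higher_differentiable_on {0<..} (\<lambda>p. fderiv (\<lambda>x::real. x powr a) p v) n"
      by (rule higher_differentiable_on_cong) (use fderiv_eq[OF d] in auto)
  qed
qed simp

lemma higher_differentiable_on_ln: "higher_differentiable_on {0<..} (\<lambda>x::real. ln x) n"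
proof (cases n)
  case (Suc k)
  have d: "((\<lambda>x::real. ln x) has_derivative (\<lambda>v. p powr (-1) * v)) (at p)" if "p \<in> {0<..}" for p
    using DERIV_ln[of p] that by (auto simp: has_field_derivative_def powr_minus)
  show ?thesis unfolding Suc
  proof (rule higher_differentiable_onI)
    show "(\<lambda>x::real. ln x) differentiable (at p)" if "p \<in> {0<..}" for p
      using d[OF that] by (auto simp: differentiable_def)
    fix v
    have "higher_differentiable_on {0<..} (\<lambda>p::real. p powr (-1) * v) k"
      by (rule higher_differentiable_on_mult[OF higher_differentiable_on_powr
            higher_differentiable_on_const]) simp
    then show "higher_differentiable_on {0<..} (\<lambda>p. fderiv (\<lambda>x::real. ln x) p v) k"
      by (rule higher_differentiable_on_cong) (use fderiv_eq[OF d] in auto)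
  qed
qed simp

lemma higher_differentiable_on_imp_continuous_on:
  "higher_differentiable_on U f (Suc n) \<Longrightarrow> continuous_on U f"
  by (rule differentiable_imp_continuous_on, rule differentiable_at_imp_differentiable_on)
    (rule higher_differentiable_on_differentiable)

section \<open>The Kaehler metric of a potential\<close>

lemma has_real_derivative_along_line:
  fixes F :: "'a::real_normed_vector \<Rightarrow> real"
  assumes "(F has_derivative F') (at (p + x *\<^sub>R v))"
  shows "((\<lambda>x. F (p + x *\<^sub>R v)) has_real_derivative F' v) (at x)"
proof -
  have "((\<lambda>x. p + x *\<^sub>R v) has_derivative (\<lambda>h. h *\<^sub>R v)) (at x)"
    by (auto intro!: derivative_eq_intros)
  from has_derivative_compose[OF this assms]
  have "((\<lambda>x. F (p + x *\<^sub>R v)) has_derivative (\<lambda>h. F' (h *\<^sub>R v))) (at x)" .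
  moreover have "linear F'" using assms has_derivative_linear by blast
  ultimately show ?thesis
    by (intro has_derivative_imp_has_field_derivative) (auto simp: linear_scale)
qed

lemma eventually_along_line_in_open:
  fixes p :: "'a::real_normed_vector"
  assumes "open U" "p \<in> U"
  shows "\<forall>\<^sub>F x in nhds 0. p + x *\<^sub>R v \<in> U"
proof -
  have "continuous_on UNIV (\<lambda>x::real. p + x *\<^sub>R v)" by (intro continuous_intros)
  then have "open {x::real. p + x *\<^sub>R v \<in> U}"
    using open_vimage[OF assms(1)] by (simp add: vimage_def)
  then show ?thesis using assms(2) eventually_nhds_in_open by fastforce
qed

definition hessian :: "('a::real_normed_vector \<Rightarrow> real) \<Rightarrow> 'a \<Rightarrow> 'a \<Rightarrow> 'a \<Rightarrow> real" where
  "hessian psi p v w = fderiv (\<lambda>q. fderiv psi q v) p w"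

context
  fixes psi :: "'a::real_normed_vector \<Rightarrow> real" and U :: "'a set"
  assumes twice: "higher_differentiable_on U psi 2" and U: "open U"
begin

lemma has_derivative_hessian: "p \<in> U \<Longrightarrow> ((\<lambda>q. fderiv psi q v) has_derivative hessian psi p v) (at p)"
  unfolding hessian_def
  by (rule higher_differentiable_on_has_derivative, rule higher_differentiable_on_fderiv)
    (use twice in \<open>simp_all add: numeral_2_eq_2\<close>)

lemma second_derivative_along_line:
  assumes p: "p \<in> U"
  shows "deriv (deriv (\<lambda>x. psi (p + x *\<^sub>R v))) 0 = hessian psi p v v"
proof -
  have "deriv (\<lambda>x. psi (p + x *\<^sub>R v)) x = fderiv psi (p + x *\<^sub>R v) v" if "p + x *\<^sub>R v \<in> U" for x
    using twice that
    by (intro DERIV_imp_deriv has_real_derivative_along_line higher_differentiable_on_has_derivative)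
      (auto simp: numeral_2_eq_2)
  then have "deriv (deriv (\<lambda>x. psi (p + x *\<^sub>R v))) 0 = deriv (\<lambda>x. fderiv psi (p + x *\<^sub>R v) v) 0"
    by (intro deriv_cong_ev eventually_mono[OF eventually_along_line_in_open[OF U p]]) auto
  also have "\<dots> = hessian psi p v v"
    using has_derivative_hessian[OF p] by (intro DERIV_imp_deriv has_real_derivative_along_line) simp
  finally show ?thesis .
qed

lemma linear_hessian_right: "p \<in> U \<Longrightarrow> linear (hessian psi p v)"
  using has_derivative_hessian has_derivative_linear by blast

lemma linear_hessian_left:
  assumes p: "p \<in> U"
  shows "linear (\<lambda>v. hessian psi p v w)"
proof -
  have lin: "linear (fderiv psi q)" if "q \<in> U" for q
    using twice that
    by (intro linear_frechet_derivative higher_differentiable_on_differentiable)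
      (auto simp: numeral_2_eq_2)
  have comb: "hessian psi p (a *\<^sub>R v1 + b *\<^sub>R v2) w = a * hessian psi p v1 w + b * hessian psi p v2 w"
    for a b v1 v2
  proof -
    have "((\<lambda>q. a * fderiv psi q v1 + b * fderiv psi q v2) has_derivative
        (\<lambda>w. a * hessian psi p v1 w + b * hessian psi p v2 w)) (at p)"
      by (intro has_derivative_add has_derivative_mult_right has_derivative_hessian p)
    then have "((\<lambda>q. fderiv psi q (a *\<^sub>R v1 + b *\<^sub>R v2)) has_derivative
        (\<lambda>w. a * hessian psi p v1 w + b * hessian psi p v2 w)) (at p)"
      by (rule has_derivative_transform_within_open[OF _ U p])
        (simp add: lin linear_add linear_scale)
    then show ?thesis
      using has_derivative_hessian[OF p] has_derivative_unique by metis
  qed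
  show ?thesis
    by (rule linearI) (use comb[of 1 _ 1] comb[of _ _ 0] in simp_all)
qed

end

locale complex_structure =
  fixes sc :: "complex \<Rightarrow> 'a::real_normed_vector \<Rightarrow> 'a"
  assumes sc_of_real: "\<And>x v. sc (complex_of_real x) v = x *\<^sub>R v"
    and sc_imaginary: "\<And>y v. sc (\<i> * complex_of_real y) v = y *\<^sub>R sc \<i> v"
    and linear_J: "linear (sc \<i>)"
begin

abbreviation J :: "'a \<Rightarrow> 'a" where "J \<equiv> sc \<i>"

context
  fixes psi :: "'a \<Rightarrow> real" and U :: "'a set"
  assumes twice: "higher_differentiable_on U psi 2" and U: "open U"
begin

lemma kform_eq_hessian:
  "p \<in> U \<Longrightarrow> kform sc psi p v = (hessian psi p v v + hessian psi p (J v) (J v)) / 4"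
  unfolding kform_def sc_of_real sc_imaginary second_derivative_along_line[OF twice U] ..

lemma rmetric_eq_hessian:
  assumes p: "p \<in> U"
  shows "rmetric sc psi p u v =
    (hessian psi p u v + hessian psi p v u + hessian psi p (J u) (J v) + hessian psi p (J v) (J u)) / 8"
proof -
  interpret L: linear "\<lambda>v. hessian psi p v w" for w by (rule linear_hessian_left[OF twice U p])
  interpret R: linear "hessian psi p w" for w by (rule linear_hessian_right[OF twice U p])
  show ?thesis
    unfolding rmetric_def kform_eq_hessian[OF p] linear_add[OF linear_J] linear_diff[OF linear_J]
    by (simp add: L.add L.diff R.add R.diff field_simps)
qed

lemma linear_rmetric:
  assumes p: "p \<in> U"
  shows "linear (rmetric sc psi p u)"
proof -
  interpret L: linear "\<lambda>v. hessian psi p v w" for w by (rule linear_hessian_left[OF twice U p])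
  interpret R: linear "hessian psi p w" for w by (rule linear_hessian_right[OF twice U p])
  show ?thesis
    by (rule linearI)
      (simp_all add: rmetric_eq_hessian[OF p] linear_add[OF linear_J] linear_scale[OF linear_J]
        L.add L.scale R.add R.scale algebra_simps add_divide_distrib)
qed

end

lemma linear_deriv_rmetric_along_line:
  assumes thrice: "higher_differentiable_on U psi 3" and U: "open U" and p: "p \<in> U"
  shows "linear (\<lambda>w. deriv (\<lambda>r. rmetric sc psi (p + r *\<^sub>R w) u u) 0)"
proof -
  have twice: "higher_differentiable_on U psi 2"
    using higher_differentiable_on_Suc_imp[of U psi 2] thrice by (simp add: numeral_3_eq_3)
  define \<Phi> where "\<Phi> q = (hessian psi q u u + hessian psi q (J u) (J u)) * (1/4)" for q
  have "higher_differentiable_on U (\<lambda>q. hessian psi q x x) (Suc 0)" for x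
    using thrice unfolding hessian_def numeral_3_eq_3
    by (intro higher_differentiable_on_fderiv)
  then have "higher_differentiable_on U \<Phi> (Suc 0)"
    unfolding \<Phi>_def using U
    by (intro higher_differentiable_on_mult higher_differentiable_on_add higher_differentiable_on_const)
  then have \<Phi>': "(\<Phi> has_derivative fderiv \<Phi> p) (at p)"
    using p by (rule higher_differentiable_on_has_derivative)
  have "deriv (\<lambda>r. rmetric sc psi (p + r *\<^sub>R w) u u) 0 = fderiv \<Phi> p w" for w
  proof -
    have "rmetric sc psi q u u = \<Phi> q" if "q \<in> U" for q
      unfolding rmetric_eq_hessian[OF twice U that] \<Phi>_def by simp
    then have "deriv (\<lambda>r. rmetric sc psi (p + r *\<^sub>R w) u u) 0 = deriv (\<lambda>r. \<Phi> (p + r *\<^sub>R w)) 0"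
      by (intro deriv_cong_ev eventually_mono[OF eventually_along_line_in_open[OF U p]]) auto
    also have "\<dots> = fderiv \<Phi> p w"
      using \<Phi>' by (intro DERIV_imp_deriv has_real_derivative_along_line) simp
    finally show ?thesis .
  qed
  then show ?thesis
    using has_derivative_linear[OF \<Phi>'] by simp
qed

end

lemma kform_pullback:
  assumes "\<And>x y. \<phi> (x + y) = \<phi> x + \<phi> y" and "\<And>c v. sb c (\<phi> v) = \<phi> (sa c v)"
    and "\<And>x. psib (\<phi> x) = psia x"
  shows "kform sb psib (\<phi> p) (\<phi> v) = kform sa psia p v"
  unfolding kform_def assms(2) assms(1)[symmetric] assms(3) ..

lemma rmetric_pullback:
  assumes "linear \<phi>" and "\<And>c v. sb c (\<phi> v) = \<phi> (sa c v)" and "\<And>x. psib (\<phi> x) = psia x"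
  shows "rmetric sb psib (\<phi> p) (\<phi> u) (\<phi> v) = rmetric sa psia p u v"
  unfolding rmetric_def linear_add[OF assms(1), symmetric] linear_diff[OF assms(1), symmetric]
    kform_pullback[of \<phi> sb sa psib psia, OF linear_add[OF assms(1)] assms(2,3)] ..

context complex_structure
begin

context
  fixes T :: "'a \<Rightarrow> 'a" and psi :: "'a \<Rightarrow> real"
  assumes linear_T: "linear T" and T_sc: "\<And>c v. sc c (T v) = T (sc c v)"
    and psi_T: "\<And>x. psi (T x) = psi x"
begin

lemma rmetric_invariant: "rmetric sc psi (T p) (T u) (T v) = rmetric sc psi p u v"
  by (rule rmetric_pullback[of T sc sc psi psi, OF linear_T T_sc psi_T])

lemma rmetric_eq_0_if_reflected:
  assumes "higher_differentiable_on U psi 2" "open U" "p \<in> U"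
    and "T p = p" "T u = u" "T c = - c"
  shows "rmetric sc psi p u c = 0"
proof -
  have "rmetric sc psi p u c = rmetric sc psi (T p) (T u) (T c)"
    by (rule rmetric_invariant[symmetric])
  also have "\<dots> = - rmetric sc psi p u c"
    using assms linear_neg[OF linear_rmetric[OF assms(1-3)]] by simp
  finally show ?thesis by simp
qed

lemma deriv_rmetric_eq_0_if_reflected:
  assumes "higher_differentiable_on U psi 3" "open U" "p \<in> U"
    and "T p = p" "T u = u" "T c = - c"
  shows "deriv (\<lambda>r. rmetric sc psi (p + r *\<^sub>R c) u u) 0 = 0"
proof -
  have "rmetric sc psi (p + r *\<^sub>R c) u u = rmetric sc psi (p + r *\<^sub>R (- c)) u u" for r
  proof -
    have "T (p + r *\<^sub>R c) = p + r *\<^sub>R (- c)"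
      using assms(4,6) by (simp add: linear_add[OF linear_T] linear_scale[OF linear_T])
    then show ?thesis
      using rmetric_invariant[of "p + r *\<^sub>R c" u u] assms(5) by simp
  qed
  then have "deriv (\<lambda>r. rmetric sc psi (p + r *\<^sub>R c) u u) 0
      = deriv (\<lambda>r. rmetric sc psi (p + r *\<^sub>R (- c)) u u) 0" by simp
  also have "\<dots> = - deriv (\<lambda>r. rmetric sc psi (p + r *\<^sub>R c) u u) 0"
    using linear_neg[OF linear_deriv_rmetric_along_line[OF assms(1-3)]] by simp
  finally show ?thesis by simp
qed

end

end

section \<open>Linear Kaehler immersions\<close>

lemma kahler_immersion_linear:
  assumes f: "bounded_linear f" and "f ` M1 \<subseteq> M2"
    and f_sc: "\<And>c v. sb c (f v) = f (sa c v)" and psi: "\<And>x. psib (f x) = psia x"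
  shows "kahler_immersion M1 V1 sa psia M2 sb psib f"
proof -
  have f': "(f has_derivative f) (at p)" for p
    using f by (rule bounded_linear_imp_has_derivative)
  have "kform sb psib (f p) (L v) = kform sa psia p v" if "(f has_derivative L) (at p)" for p L v
  proof -
    have "L = f" using has_derivative_unique[OF that f'] .
    then show ?thesis
      using kform_pullback[of f sb sa psib psia] f_sc psi
      by (simp add: linear_add[OF bounded_linear.linear[OF f]])
  qed
  then show ?thesis
    using assms(2) f' f_sc unfolding kahler_immersion_def holo_on_def by metis
qed

text \<open>A linear map intertwines the Euler--Lagrange equations of the two metrics as soon
  as, along its image, pairing with an arbitrary ambient direction w reduces to pairing
  with a fixed retraction of w back to the source.\<close>

lemma totally_geodesic_linear:
  assumes f: "bounded_linear f" and "f ` M1 \<subseteq> M2"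
    and V: "\<And>v. v \<in> V1 \<Longrightarrow> f v \<in> V2" "\<And>w. w \<in> V2 \<Longrightarrow> \<pi> w \<in> V1"
    and metric: "\<And>p u w. p \<in> M1 \<Longrightarrow> w \<in> V2 \<Longrightarrow> G2 (f p) (f u) w = G1 p u (\<pi> w)"
    and deriv: "\<And>p u w. p \<in> M1 \<Longrightarrow> w \<in> V2 \<Longrightarrow>
      deriv (\<lambda>r. G2 (f p + r *\<^sub>R w) (f u) (f u)) 0 = deriv (\<lambda>r. G1 (p + r *\<^sub>R \<pi> w) u u) 0"
  shows "totally_geodesic M1 V1 G1 M2 V2 G2 f"
  unfolding totally_geodesic_def
proof (intro allI impI)
  fix \<gamma> a b
  assume "geodesic M1 V1 G1 \<gamma> a b"
  then obtain \<gamma>' where "a < b" and in_M1: "\<And>t. t \<in> {a<..<b} \<Longrightarrow> \<gamma> t \<in> M1"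
    and \<gamma>': "\<And>t. t \<in> {a<..<b} \<Longrightarrow> (\<gamma> has_vector_derivative \<gamma>' t) (at t) \<and> \<gamma>' t \<in> V1"
    and EL: "\<And>t w. t \<in> {a<..<b} \<Longrightarrow> w \<in> V1 \<Longrightarrow> ((\<lambda>s. G1 (\<gamma> s) (\<gamma>' s) w) has_real_derivative
        (deriv (\<lambda>r. G1 (\<gamma> t + r *\<^sub>R w) (\<gamma>' t) (\<gamma>' t)) 0 / 2)) (at t)"
    unfolding geodesic_def by blast
  show "geodesic M2 V2 G2 (f \<circ> \<gamma>) a b"
    unfolding geodesic_def
  proof (intro conjI ballI exI[of _ "\<lambda>t. f (\<gamma>' t)"])
    fix t assume t: "t \<in> {a<..<b}"
    show "(f \<circ> \<gamma>) t \<in> M2" using in_M1[OF t] assms(2) by auto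
    show "(f \<circ> \<gamma> has_vector_derivative f (\<gamma>' t)) (at t)"
      using bounded_linear.has_vector_derivative[OF f] \<gamma>'[OF t] by (simp add: o_def)
    show "f (\<gamma>' t) \<in> V2" using \<gamma>'[OF t] V(1) by blast
    fix w assume w: "w \<in> V2"
    have "((\<lambda>s. G2 ((f \<circ> \<gamma>) s) (f (\<gamma>' s)) w) has_real_derivative
        (deriv (\<lambda>r. G1 (\<gamma> t + r *\<^sub>R \<pi> w) (\<gamma>' t) (\<gamma>' t)) 0 / 2)) (at t)"
      using metric[OF in_M1 w]
      by (intro has_field_derivative_transform_within_open[OF EL[OF t V(2)[OF w]] _ t]) auto
    then show "((\<lambda>s. G2 ((f \<circ> \<gamma>) s) (f (\<gamma>' s)) w) has_real_derivative
        (deriv (\<lambda>r. G2 ((f \<circ> \<gamma>) t + r *\<^sub>R w) (f (\<gamma>' t)) (f (\<gamma>' t))) 0 / 2)) (at t)"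
      using deriv[OF in_M1[OF t] w] by simp
  qed fact
qed

section \<open>The diagonal embedding\<close>

lemma complex_structure_sc_src: "complex_structure (sc_src :: complex \<Rightarrow> (complex^'m) \<times> complex \<Rightarrow> _)"
proof (rule complex_structure.intro)
  show "sc_src (complex_of_real x) v = x *\<^sub>R v" for x and v :: "(complex^'m) \<times> complex"
    by (cases v) (simp add: sc_src_def vec_eq_iff scaleR_conv_of_real[where 'a=complex])
  show "sc_src (\<i> * complex_of_real y) v = y *\<^sub>R sc_src \<i> v" for y and v :: "(complex^'m) \<times> complex"
    by (cases v) (simp add: sc_src_def vec_eq_iff scaleR_conv_of_real[where 'a=complex])
  show "linear (sc_src \<i> :: (complex^'m) \<times> complex \<Rightarrow> _)"
    by (rule linearI) (auto simp: sc_src_def vec_eq_iff scaleR_conv_of_real[where 'a=complex] case_prod_unfold algebra_simps)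
qed

lemma complex_structure_sc_tgt: "complex_structure (sc_tgt :: complex \<Rightarrow> (complex^'m^'m) \<times> complex \<Rightarrow> _)"
proof (rule complex_structure.intro)
  show "sc_tgt (complex_of_real x) v = x *\<^sub>R v" for x and v :: "(complex^'m^'m) \<times> complex"
    by (cases v) (simp add: sc_tgt_def vec_eq_iff scaleR_conv_of_real[where 'a=complex])
  show "sc_tgt (\<i> * complex_of_real y) v = y *\<^sub>R sc_tgt \<i> v" for y and v :: "(complex^'m^'m) \<times> complex"
    by (cases v) (simp add: sc_tgt_def vec_eq_iff scaleR_conv_of_real[where 'a=complex])
  show "linear (sc_tgt \<i> :: (complex^'m^'m) \<times> complex \<Rightarrow> _)"
    by (rule linearI) (auto simp: sc_tgt_def vec_eq_iff scaleR_conv_of_real[where 'a=complex] case_prod_unfold algebra_simps)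
qed

definition diag_embed :: "(complex^'m) \<times> complex \<Rightarrow> (complex^'m^'m) \<times> complex" where
  "diag_embed = (\<lambda>(z, w). (diag_map z, w))"

definition diag_part :: "(complex^'m^'m) \<times> complex \<Rightarrow> (complex^'m) \<times> complex" where
  "diag_part W = ((\<chi> i. fst W $ i $ i), snd W)"

lemma linear_diag_embed: "linear diag_embed"
  by (rule linearI) (auto simp: diag_embed_def diag_map_def vec_eq_iff case_prod_unfold)

lemma bounded_linear_diag_embed: "bounded_linear (diag_embed :: (complex^'m::finite) \<times> complex \<Rightarrow> _)"
  using linear_diag_embed linear_conv_bounded_linear by blast

lemma diag_embed_sc: "sc_tgt c (diag_embed v) = diag_embed (sc_src c v)"
  by (cases v) (simp add: diag_embed_def sc_tgt_def sc_src_def diag_map_def vec_eq_iff)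

lemma det_diag_map: "det (diag_map d) = (\<Prod>i\<in>UNIV. d$i)"
  by (subst det_diagonal) (simp_all add: diag_map_def)

lemma diag_map_mult_cadj:
  "mat 1 - diag_map z ** cadj (diag_map z) = diag_map (\<chi> i. complex_of_real (1 - (cmod (z$i))^2))"
proof -
  have "(diag_map z ** cadj (diag_map z)) $ i $ j =
      (\<Sum>k\<in>UNIV. if k = i then (if i = j then z$i * cnj (z$i) else 0) else 0)" for i j
    unfolding matrix_matrix_mult_def cadj_def diag_map_def vec_lambda_beta by (rule sum.cong) auto
  then show ?thesis
    by (simp add: vec_eq_iff diag_map_def mat_def flip: complex_norm_square)
qed

lemma N_Omega3_diag_map: "N_Omega3 (diag_map z) = N_poly z"
  unfolding N_Omega3_def N_poly_def diag_map_mult_cadj det_diag_map vec_lambda_beta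
    of_real_prod[symmetric] Re_complex_of_real ..

lemma pos_def_herm_diag_map:
  fixes d :: "'m::finite \<Rightarrow> real"
  assumes "\<And>i. 0 < d i"
  shows "pos_def_herm (diag_map (\<chi> i. complex_of_real (d i)))"
  unfolding pos_def_herm_def
proof (intro allI impI)
  fix v :: "complex^'m" assume "v \<noteq> 0"
  then obtain i0 where i0: "v$i0 \<noteq> 0" by (auto simp: vec_eq_iff)
  have "(\<Sum>j\<in>UNIV. cnj (v$i) * diag_map (\<chi> i. complex_of_real (d i)) $ i $ j * v$j)
      = complex_of_real (d i * (cmod (v$i))^2)" for i
  proof -
    have "(\<Sum>j\<in>UNIV. cnj (v$i) * diag_map (\<chi> i. complex_of_real (d i)) $ i $ j * v$j)
        = (\<Sum>j\<in>UNIV. if j = i then complex_of_real (d i) * (v$i * cnj (v$i)) else 0)"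
      by (rule sum.cong) (auto simp: diag_map_def)
    then show ?thesis by (simp flip: complex_norm_square)
  qed
  then have "Re (\<Sum>i\<in>UNIV. \<Sum>j\<in>UNIV. cnj (v$i) * diag_map (\<chi> i. complex_of_real (d i)) $ i $ j * v$j)
      = (\<Sum>i\<in>UNIV. d i * (cmod (v$i))^2)"
    by (simp add: Re_sum)
  also have "\<dots> > 0"
    using i0 assms by (intro sum_pos2[of UNIV i0]) (simp_all add: less_imp_le)
  finally show "0 < Re (\<Sum>i\<in>UNIV. \<Sum>j\<in>UNIV.
      cnj (v$i) * diag_map (\<chi> i. complex_of_real (d i)) $ i $ j * v$j)" .
qed

lemma hpot_diag_embed: "hpot N_Omega3 \<mu> (diag_embed x) = hpot N_poly \<mu> x"
  by (cases x) (simp add: hpot_def diag_embed_def N_Omega3_diag_map)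

lemma polydisk_factor_pos:
  assumes "z \<in> polydisk"
  shows "0 < 1 - (cmod (z$i))^2"
proof -
  have "cmod (z$i) < 1" using assms by (simp add: polydisk_def)
  then show ?thesis by (simp add: power_less_one_iff)
qed

lemma N_poly_pos: "z \<in> polydisk \<Longrightarrow> 0 < N_poly z"
  unfolding N_poly_def using polydisk_factor_pos by (blast intro: prod_pos)

lemma diag_map_in_Omega3:
  assumes "z \<in> polydisk"
  shows "diag_map z \<in> Omega3"
proof -
  have "pos_def_herm (mat 1 - diag_map z ** cadj (diag_map z))"
    unfolding diag_map_mult_cadj using polydisk_factor_pos[OF assms] by (rule pos_def_herm_diag_map)
  moreover have "transpose (diag_map z) = diag_map z"
    by (simp add: transpose_def diag_map_def vec_eq_iff)
  ultimately show ?thesis by (simp add: Omega3_def)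
qed

lemma diag_embed_hartogs:
  "x \<in> hartogs polydisk N_poly \<mu> \<Longrightarrow> diag_embed x \<in> hartogs Omega3 N_Omega3 \<mu>"
  by (cases x) (auto simp: hartogs_def diag_embed_def N_Omega3_diag_map diag_map_in_Omega3)

lemma diag_embed_in_sym_tangent: "diag_embed v \<in> sym_tangent"
  by (cases v) (simp add: sym_tangent_def diag_embed_def transpose_def diag_map_def vec_eq_iff)

section \<open>Sign reflections of the target\<close>

lemma det_scale_rows_columns:
  "det (\<chi> i j. s i * s j * A$i$j) = (\<Prod>i\<in>UNIV. s i)^2 * det (A::'a::comm_ring_1^'n^'n)"
proof -
  have "det (\<chi> i j. s i * s j * A$i$j) = (\<Prod>i\<in>UNIV. s i) * det (\<chi> i j. s j * A$i$j)"
    using det_rows_mul[of s "\<lambda>i. \<chi> j. s j * A$i$j"]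
    by (simp add: vector_scalar_mult_def mult.assoc)
  also have "det (\<chi> i j. s j * A$i$j) = det (\<chi> i. s i *s (\<chi> j. A$j$i))"
    by (subst det_transpose[symmetric]) (simp add: transpose_def vector_scalar_mult_def)
  also have "\<dots> = (\<Prod>i\<in>UNIV. s i) * det A"
    by (subst det_rows_mul) (simp add: transpose_def[symmetric])
  finally show ?thesis by (simp add: power2_eq_square)
qed

lemma N_Omega3_sign_change:
  fixes s :: "'m::finite \<Rightarrow> complex" and Z :: "complex^'m^'m"
  assumes "\<And>i. s i * s i = 1" "\<And>i. cnj (s i) = s i"
  shows "N_Omega3 (\<chi> i j. s i * s j * Z$i$j) = N_Omega3 Z"
proof -
  let ?Z' = "\<chi> i j. s i * s j * Z$i$j"
  have "(?Z' ** cadj ?Z') $ i $ j = s i * s j * (Z ** cadj Z) $ i $ j" for i j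
  proof -
    have "(?Z' ** cadj ?Z') $ i $ j = (\<Sum>l\<in>UNIV. s i * s j * (s l * s l) * (Z$i$l * cnj (Z$j$l)))"
      by (simp add: matrix_matrix_mult_def cadj_def assms(2) algebra_simps)
    then show ?thesis
      by (simp add: assms(1) matrix_matrix_mult_def cadj_def sum_distrib_left)
  qed
  moreover have "(mat 1 :: complex^'m^'m) $ i $ j = s i * s j * (mat 1 :: complex^'m^'m) $ i $ j" for i j
    by (simp add: mat_def assms(1))
  ultimately have M: "mat 1 - ?Z' ** cadj ?Z' = (\<chi> i j. s i * s j * (mat 1 - Z ** cadj Z)$i$j)"
    by (simp add: vec_eq_iff algebra_simps)
  have "(\<Prod>i\<in>UNIV. s i)^2 = 1"
    by (simp add: power2_eq_square assms(1) flip: prod.distrib)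
  then show ?thesis
    unfolding N_Omega3_def M det_scale_rows_columns by simp
qed

text \<open>reflect_at k acts on the matrix part as Z \<mapsto> D Z D with D = diag(1,..,1,-1,1,..,1),
  the -1 in position k.\<close>

definition sign_at :: "'m \<Rightarrow> 'm \<Rightarrow> complex" where
  "sign_at k i = (if i = k then -1 else 1)"

definition reflect_at :: "'m::finite \<Rightarrow> (complex^'m^'m) \<times> complex \<Rightarrow> (complex^'m^'m) \<times> complex" where
  "reflect_at k = (\<lambda>(Z, w). ((\<chi> i j. sign_at k i * sign_at k j * Z$i$j), w))"

definition off_diag_at :: "'m::finite \<Rightarrow> (complex^'m^'m) \<times> complex \<Rightarrow> (complex^'m^'m) \<times> complex" where
  "off_diag_at k W = ((\<chi> i j. if i \<noteq> j \<and> (i = k \<or> j = k) then fst W $ i $ j else 0), 0)"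

lemma linear_reflect_at: "linear (reflect_at k)"
  by (rule linearI) (auto simp: reflect_at_def vec_eq_iff case_prod_unfold algebra_simps)

lemma reflect_at_sc: "sc_tgt c (reflect_at k v) = reflect_at k (sc_tgt c v)"
  by (cases v) (simp add: reflect_at_def sc_tgt_def vec_eq_iff algebra_simps)

lemma hpot_reflect_at: "hpot N_Omega3 \<mu> (reflect_at k x) = hpot N_Omega3 \<mu> x"
  by (cases x) (simp add: hpot_def reflect_at_def N_Omega3_sign_change sign_at_def)

lemma reflect_at_diag_embed: "reflect_at k (diag_embed x) = diag_embed x"
  by (cases x) (auto simp: reflect_at_def diag_embed_def diag_map_def vec_eq_iff sign_at_def)

lemma reflect_at_off_diag_at: "reflect_at k (off_diag_at k W) = - off_diag_at k W"
  by (auto simp: reflect_at_def off_diag_at_def vec_eq_iff sign_at_def)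

lemma diag_off_diag_decomposition:
  "W = diag_embed (diag_part W) + (\<Sum>k\<in>UNIV. (1/2) *\<^sub>R off_diag_at k W)"
proof -
  have fst_sum: "fst (\<Sum>k\<in>UNIV. (1/2) *\<^sub>R off_diag_at k W) $ i $ j = (if i = j then 0 else fst W $ i $ j)"
    for i j
  proof (cases "i = j")
    case False
    have "fst (\<Sum>k\<in>UNIV. (1/2) *\<^sub>R off_diag_at k W) $ i $ j
        = (\<Sum>k\<in>UNIV. (if k = i then (1/2) *\<^sub>R fst W $ i $ j else 0)
            + (if k = j then (1/2) *\<^sub>R fst W $ i $ j else 0))"
      unfolding fst_sum sum_component using False by (intro sum.cong) (auto simp: off_diag_at_def)
    also have "\<dots> = fst W $ i $ j"
      by (simp add: sum.distrib scaleR_conv_of_real)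
    finally show ?thesis using False by simp
  qed (simp add: fst_sum sum_component off_diag_at_def)
  moreover have "snd (\<Sum>k\<in>UNIV. (1/2) *\<^sub>R off_diag_at k W) = 0"
    by (simp add: snd_sum off_diag_at_def)
  ultimately show ?thesis
    by (simp add: prod_eq_iff vec_eq_iff diag_embed_def diag_part_def diag_map_def)
qed

lemma linear_eq_on_diag_part:
  assumes "linear F" "\<And>k. F (off_diag_at k W) = 0"
  shows "F W = F (diag_embed (diag_part W))"
  by (subst diag_off_diag_decomposition)
    (simp add: assms linear_add[OF assms(1)] linear_sum[OF assms(1)] linear_scale[OF assms(1)])

section \<open>Smoothness of the target potential\<close>

lemma higher_differentiable_on_N_Omega3:
  "higher_differentiable_on U (\<lambda>x::(complex^'m::finite^'m) \<times> complex. N_Omega3 (fst x)) n"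
proof -
  have entry: "higher_differentiable_on UNIV (\<lambda>x::(complex^'m^'m) \<times> complex. fst x $ i $ k) n" for i k
    by (intro higher_differentiable_on_bounded_linear bounded_linear_compose[OF bounded_linear_vec_nth]
        bounded_linear_fst)
  have "higher_differentiable_on UNIV
      (\<lambda>x::(complex^'m^'m) \<times> complex. (mat 1 - fst x ** cadj (fst x)) $ i $ j) n" for i j
    unfolding matrix_matrix_mult_def cadj_def
    by (simp, intro higher_differentiable_on_diff higher_differentiable_on_sum
        higher_differentiable_on_mult higher_differentiable_on_const entry
        higher_differentiable_on_bounded_linear_compose[OF entry bounded_linear_cnj]) auto
  then have "higher_differentiable_on UNIV (\<lambda>x::(complex^'m^'m) \<times> complex.
      Re (det (mat 1 - fst x ** cadj (fst x)))) n"
    unfolding det_def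
    by (intro higher_differentiable_on_bounded_linear_compose[OF _ bounded_linear_Re]
        higher_differentiable_on_sum higher_differentiable_on_mult higher_differentiable_on_const
        higher_differentiable_on_prod) (auto simp: finite_permutations)
  then show ?thesis
    unfolding N_Omega3_def by (rule higher_differentiable_on_subset) simp
qed

lemma higher_differentiable_on_norm_snd_squared:
  "higher_differentiable_on U (\<lambda>x::'a::real_normed_vector \<times> complex. (cmod (snd x))^2) n"
proof -
  have snd: "higher_differentiable_on UNIV (\<lambda>x::'a \<times> complex. snd x) n"
    by (rule higher_differentiable_on_bounded_linear[OF bounded_linear_snd])
  have "higher_differentiable_on UNIV (\<lambda>x::'a \<times> complex. Re (snd x * cnj (snd x))) n"
    by (intro higher_differentiable_on_bounded_linear_compose[OF _ bounded_linear_Re]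
        higher_differentiable_on_mult snd
        higher_differentiable_on_bounded_linear_compose[OF snd bounded_linear_cnj]) auto
  then show ?thesis
    by (rule higher_differentiable_on_subset[OF higher_differentiable_on_cong])
      (auto simp flip: complex_norm_square)
qed

text \<open>Only the image of the diagonal embedding has to lie in this open set; we never need
  that it contains the target domain.\<close>

definition hpot_domain :: "real \<Rightarrow> ((complex^'m::finite^'m) \<times> complex) set" where
  "hpot_domain \<mu> = {x. 0 < N_Omega3 (fst x) \<and> 0 < N_Omega3 (fst x) powr \<mu> - (cmod (snd x))^2}"

lemma open_hpot_domain: "open (hpot_domain \<mu> :: ((complex^'m::finite^'m) \<times> complex) set)"
proof -
  define V :: "((complex^'m^'m) \<times> complex) set" where "V = {x. 0 < N_Omega3 (fst x)}"
  have V: "open V" unfolding V_def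
    by (rule open_Collect_less[OF continuous_on_const
          higher_differentiable_on_imp_continuous_on[OF higher_differentiable_on_N_Omega3]])
  have "higher_differentiable_on V (\<lambda>x. N_Omega3 (fst x) powr \<mu> - (cmod (snd x))^2) (Suc 0)"
    by (intro higher_differentiable_on_diff higher_differentiable_on_norm_snd_squared V
        higher_differentiable_on_compose_real[OF higher_differentiable_on_powr
          higher_differentiable_on_N_Omega3]) (auto simp: V_def)
  then have "open ((\<lambda>x. N_Omega3 (fst x) powr \<mu> - (cmod (snd x))^2) -` {0<..} \<inter> V)"
    by (intro continuous_on_open_vimage[OF V, THEN iffD1, rule_format] open_greaterThan
        higher_differentiable_on_imp_continuous_on)
  moreover have "hpot_domain \<mu> = (\<lambda>x. N_Omega3 (fst x) powr \<mu> - (cmod (snd x))^2) -` {0<..} \<inter> V"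
    by (auto simp: hpot_domain_def V_def)
  ultimately show ?thesis by simp
qed

lemma higher_differentiable_on_hpot:
  "higher_differentiable_on (hpot_domain \<mu>) (hpot N_Omega3 \<mu>) n"
proof -
  have "higher_differentiable_on (hpot_domain \<mu>) (\<lambda>x. N_Omega3 (fst x) powr \<mu> - (cmod (snd x))^2) n"
    by (intro higher_differentiable_on_diff higher_differentiable_on_norm_snd_squared
        open_hpot_domain higher_differentiable_on_compose_real[OF higher_differentiable_on_powr
          higher_differentiable_on_N_Omega3]) (auto simp: hpot_domain_def)
  then have "higher_differentiable_on (hpot_domain \<mu>)
      (\<lambda>x. (-1) * ln (N_Omega3 (fst x) powr \<mu> - (cmod (snd x))^2)) n"
    by (intro higher_differentiable_on_mult higher_differentiable_on_const open_hpot_domain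
        higher_differentiable_on_compose_real[OF higher_differentiable_on_ln])
      (auto simp: hpot_domain_def)
  then show ?thesis
    by (rule higher_differentiable_on_cong[OF _ open_hpot_domain]) (simp add: hpot_def case_prod_unfold)
qed

lemma diag_embed_in_hpot_domain: "p \<in> hartogs polydisk N_poly \<mu> \<Longrightarrow> diag_embed p \<in> hpot_domain \<mu>"
  by (cases p) (auto simp: hartogs_def hpot_domain_def diag_embed_def N_Omega3_diag_map N_poly_pos)

section \<open>The metric along the diagonal\<close>

lemma rmetric_diag_embed_pullback:
  "rmetric sc_tgt (hpot N_Omega3 \<mu>) (diag_embed p) (diag_embed u) (diag_embed v)
    = rmetric sc_src (hpot N_poly \<mu>) p u v"
  by (rule rmetric_pullback[where sb = sc_tgt and sa = sc_src and psib = "hpot N_Omega3 \<mu>"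
        and psia = "hpot N_poly \<mu>", OF linear_diag_embed diag_embed_sc hpot_diag_embed[of \<mu>]])

context
  fixes p u :: "(complex^'m::finite) \<times> complex" and \<mu> :: real
  assumes p: "p \<in> hartogs polydisk N_poly \<mu>"
begin

interpretation target: complex_structure "sc_tgt :: complex \<Rightarrow> (complex^'m^'m) \<times> complex \<Rightarrow> _"
  by (rule complex_structure_sc_tgt)

lemma rmetric_diag_embed:
  "rmetric sc_tgt (hpot N_Omega3 \<mu>) (diag_embed p) (diag_embed u) W
    = rmetric sc_src (hpot N_poly \<mu>) p u (diag_part W)"
proof -
  let ?G = "rmetric sc_tgt (hpot N_Omega3 \<mu>) (diag_embed p) (diag_embed u)"
  have "?G W = ?G (diag_embed (diag_part W))"
  proof (rule linear_eq_on_diag_part)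
    show "linear ?G"
      using higher_differentiable_on_hpot open_hpot_domain diag_embed_in_hpot_domain[OF p]
      by (rule target.linear_rmetric)
    show "?G (off_diag_at k W) = 0" for k
      using higher_differentiable_on_hpot open_hpot_domain diag_embed_in_hpot_domain[OF p]
        reflect_at_diag_embed reflect_at_diag_embed reflect_at_off_diag_at
      by (rule target.rmetric_eq_0_if_reflected[where psi = "hpot N_Omega3 \<mu>",
            OF linear_reflect_at reflect_at_sc hpot_reflect_at])
  qed
  then show ?thesis by (simp add: rmetric_diag_embed_pullback)
qed

lemma deriv_rmetric_diag_embed:
  "deriv (\<lambda>r. rmetric sc_tgt (hpot N_Omega3 \<mu>) (diag_embed p + r *\<^sub>R W) (diag_embed u) (diag_embed u)) 0
    = deriv (\<lambda>r. rmetric sc_src (hpot N_poly \<mu>) (p + r *\<^sub>R diag_part W) u u) 0"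
proof -
  let ?D = "\<lambda>W. deriv (\<lambda>r. rmetric sc_tgt (hpot N_Omega3 \<mu>) (diag_embed p + r *\<^sub>R W)
      (diag_embed u) (diag_embed u)) 0"
  have "?D W = ?D (diag_embed (diag_part W))"
  proof (rule linear_eq_on_diag_part)
    show "linear ?D"
      using higher_differentiable_on_hpot open_hpot_domain diag_embed_in_hpot_domain[OF p]
      by (rule target.linear_deriv_rmetric_along_line)
    show "?D (off_diag_at k W) = 0" for k
      using higher_differentiable_on_hpot open_hpot_domain diag_embed_in_hpot_domain[OF p]
        reflect_at_diag_embed reflect_at_diag_embed reflect_at_off_diag_at
      by (rule target.deriv_rmetric_eq_0_if_reflected[where psi = "hpot N_Omega3 \<mu>",
            OF linear_reflect_at reflect_at_sc hpot_reflect_at])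
  qed
  moreover have "diag_embed p + r *\<^sub>R diag_embed w = diag_embed (p + r *\<^sub>R w)" for r w
    by (simp add: linear_add[OF linear_diag_embed] linear_scale[OF linear_diag_embed])
  ultimately show ?thesis by (simp add: rmetric_diag_embed_pullback)
qed

end

theorem lemma3p4:
  fixes \<mu> :: real
  assumes "\<mu> > 0"
  defines "f \<equiv> (\<lambda>(z, w). (diag_map z, w)) :: (complex^'m) \<times> complex \<Rightarrow> (complex^'m^'m) \<times> complex"
  shows "kahler_immersion (hartogs polydisk N_poly \<mu>) UNIV sc_src (hpot N_poly \<mu>)
           (hartogs Omega3 N_Omega3 \<mu>) sc_tgt (hpot N_Omega3 \<mu>) f
       \<and> totally_geodesic
           (hartogs polydisk N_poly \<mu>) UNIV (rmetric sc_src (hpot N_poly \<mu>))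
           (hartogs Omega3 N_Omega3 \<mu>) sym_tangent (rmetric sc_tgt (hpot N_Omega3 \<mu>)) f"
proof -
  have f: "f = diag_embed" unfolding f_def diag_embed_def ..
  have image: "diag_embed ` hartogs polydisk N_poly \<mu> \<subseteq> hartogs Omega3 N_Omega3 \<mu>"
    using diag_embed_hartogs by blast
  show ?thesis
    unfolding f
  proof
    show "kahler_immersion (hartogs polydisk N_poly \<mu>) UNIV sc_src (hpot N_poly \<mu>)
        (hartogs Omega3 N_Omega3 \<mu>) sc_tgt (hpot N_Omega3 \<mu>) diag_embed"
      by (rule kahler_immersion_linear[OF bounded_linear_diag_embed image])
        (simp_all add: diag_embed_sc hpot_diag_embed)
    show "totally_geodesic (hartogs polydisk N_poly \<mu>) UNIV (rmetric sc_src (hpot N_poly \<mu>))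
        (hartogs Omega3 N_Omega3 \<mu>) sym_tangent (rmetric sc_tgt (hpot N_Omega3 \<mu>)) diag_embed"
      by (rule totally_geodesic_linear[where \<pi> = diag_part, OF bounded_linear_diag_embed image])
        (simp_all add: diag_embed_in_sym_tangent rmetric_diag_embed deriv_rmetric_diag_embed)
  qed
qed

end
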